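(* Let $p$ be a prime, $n\ge1$, $\zeta=\zeta_{p^n}$ a primitive $p^n$th root of unity, $T=\mathbb{Z}_{(p)}[\zeta]$, $t=1-\zeta$ with valuation $v_t$. Then the tuple $\tau=(1-\zeta^j)_{j\in[0,p^n-1]}$ is minimally ordered.
   Context: A tuple $(\xi_0,\dots,\xi_{r-1})$ of pairwise distinct elements of $T$ is minimally ordered if $\sum_{i\in[0,j-1]}v_t(\xi_j-\xi_i)\le\sum_{i\in[0,j-1]}v_t(\xi_k-\xi_i)$ for all $j\in[0,r-1]$ and $k\in[j+1,r-1]$. *)

theory Defs
  imports Complex_Main "HOL-Computational_Algebra.Primes"
begin

definition Zloc :: "nat \<Rightarrow> complex set" where
  "Zloc p = {of_int a / of_int b | a b. b \<noteq> 0 \<and> \<not> (int p dvd b)}"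

definition Tring :: "nat \<Rightarrow> complex \<Rightarrow> complex set" where
  "Tring p \<zeta> = {(\<Sum>i<N. c i * \<zeta> ^ i) | N c. \<forall>i. c i \<in> Zloc p}"

text \<open>The t-adic valuation on T, t = 1 - zeta: the largest k such that t^k divides x in T
  (meaningful for nonzero x).\<close>
definition vt :: "nat \<Rightarrow> complex \<Rightarrow> complex \<Rightarrow> nat" where
  "vt p \<zeta> x = (GREATEST k. \<exists>y\<in>Tring p \<zeta>. x = (1 - \<zeta>) ^ k * y)"

definition minimally_ordered :: "nat \<Rightarrow> complex \<Rightarrow> nat \<Rightarrow> (nat \<Rightarrow> complex) \<Rightarrow> bool" where
  "minimally_ordered p \<zeta> r \<xi> \<longleftrightarrow>
     (\<forall>i<r. \<xi> i \<in> Tring p \<zeta>) \<and> inj_on \<xi> {0..<r} \<and>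
     (\<forall>j<r. \<forall>k. j < k \<and> k < r \<longrightarrow>
        (\<Sum>i<j. vt p \<zeta> (\<xi> j - \<xi> i)) \<le> (\<Sum>i<j. vt p \<zeta> (\<xi> k - \<xi> i)))"

end

theory Submission
  imports Defs "Jordan_Normal_Form.Char_Poly" "HOL-Number_Theory.Cong"
begin

(*
  Put w(m) = v_t(1 - zeta^m). As zeta^i is a unit of T, v_t(tau_j - tau_i) = w(j - i). For
  0 < m < p^n the numbers zeta^m and zeta^(p^e), e = nu_p(m), are powers of each other, so
  1 - zeta^m and 1 - zeta^(p^e) divide each other in T and w(m) = f(nu_p(m)) with f nondecreasing.
  Writing f(e) as f(0) plus the increments f(d+1) - f(d), d < e, the sum of f(nu_p(j - i)) over
  i < j becomes a combination, with nonnegative coefficients, of the numbers of multiples of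
  p^(d+1) among 1, ..., j; any j consecutive integers, such as k - i for i < j, contain at least
  as many multiples.

  That v_t(1 - zeta^m) is finite at all (the GREATEST exists) holds since 1 - zeta^m divides p^n,
  the binomial theorem makes p divide (1 - zeta)^(p^n), and 1/p is not in T: clearing
  denominators prime to p would make B/p with p not dividing B a rational algebraic integer.
*)

lemma power_mod_root_of_unity:
  fixes z :: "'a :: monoid_mult"
  assumes "z ^ M = 1"
  shows "z ^ (x mod M) = z ^ x"
  by (metis assms div_mult_mod_eq power_add power_mult power_one mult_1 mult.commute)

lemma algebraic_int_eigenvalue_of_int_mat:
  fixes A :: "int mat" and \<alpha> :: complex
  assumes A: "A \<in> carrier_mat M M" and ev: "eigenvalue (map_mat of_int A) \<alpha>"
  shows "algebraic_int \<alpha>"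
proof -
  have "map_mat of_int A \<in> carrier_mat M M"
    using A by simp
  then have "poly (char_poly (map_mat of_int A)) \<alpha> = 0"
    using ev eigenvalue_root_char_poly by blast
  moreover have "char_poly (map_mat of_int A :: complex mat) = map_poly of_int (char_poly A)"
    by (rule of_int_hom.char_poly_hom[OF A])
  moreover have "lead_coeff (char_poly A) = 1"
    using degree_monic_char_poly[OF A] by simp
  ultimately show ?thesis
    unfolding algebraic_int_altdef_ipoly by auto
qed

lemma algebraic_int_int_combination_root_of_unity:
  fixes z :: complex and e :: "nat \<Rightarrow> int"
  assumes z: "z ^ M = 1" and M: "M > 0"
  shows "algebraic_int (\<Sum>i<N. of_int (e i) * z ^ i)"
proof -
  define \<alpha> where "\<alpha> = (\<Sum>i<N. of_int (e i) * z ^ i)"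
  \<comment> \<open>The vector of the powers \<open>z ^ r\<close>, \<open>r < M\<close>, is an eigenvector for \<open>\<alpha>\<close> of the
    integer circulant matrix \<open>A\<close>.\<close>
  define A :: "int mat" where "A = mat M M (\<lambda>(l, r). \<Sum>i<N. if (i + l) mod M = r then e i else 0)"
  define v where "v = vec M (\<lambda>r. z ^ r)"
  have A: "A \<in> carrier_mat M M"
    unfolding A_def by simp
  have row: "(\<Sum>r<M. z ^ r * (\<Sum>i<N. of_int (if (i + l) mod M = r then e i else 0))) = \<alpha> * z ^ l"
    for l
  proof -
    have "(\<Sum>r<M. z ^ r * (\<Sum>i<N. of_int (if (i + l) mod M = r then e i else 0)))
        = (\<Sum>r<M. \<Sum>i<N. if (i + l) mod M = r then of_int (e i) * z ^ r else 0)"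
      by (simp add: sum_distrib_left mult.commute if_distrib cong: if_cong)
    also have "\<dots> = (\<Sum>i<N. \<Sum>r<M. if (i + l) mod M = r then of_int (e i) * z ^ r else 0)"
      by (rule sum.swap)
    also have "\<dots> = (\<Sum>i<N. of_int (e i) * z ^ (i + l))"
      using M by (simp add: sum.delta' power_mod_root_of_unity[OF z])
    also have "\<dots> = \<alpha> * z ^ l"
      unfolding \<alpha>_def by (simp add: sum_distrib_right power_add mult.assoc)
    finally show ?thesis .
  qed
  have "map_mat of_int A *\<^sub>v v = \<alpha> \<cdot>\<^sub>v v"
    by (rule eq_vecI)
      (simp_all add: A_def v_def mult_mat_vec_def scalar_prod_def atLeast0LessThan of_int_sum
        mult.commute row)
  moreover have "v \<in> carrier_vec M" "v \<noteq> 0\<^sub>v M"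
    using M by (auto simp: v_def dest!: arg_cong[where f = "\<lambda>u. u $ 0"])
  ultimately have "eigenvalue (map_mat of_int A) \<alpha>"
    using A unfolding eigenvalue_def eigenvector_def by auto
  then show ?thesis
    unfolding \<alpha>_def by (rule algebraic_int_eigenvalue_of_int_mat[OF A])
qed

context
  fixes p :: nat
  assumes p: "prime p"
begin

lemma Zloc_of_int: "of_int a \<in> Zloc p"
  unfolding Zloc_def using p prime_gt_1_nat by (intro CollectI exI[of _ a] exI[of _ 1]) auto

lemma Zloc_add_mult:
  assumes "x \<in> Zloc p" "y \<in> Zloc p"
  shows "x + y \<in> Zloc p" "x * y \<in> Zloc p"
proof -
  obtain a b where x: "x = of_int a / of_int b" "b \<noteq> 0" "\<not> int p dvd b"
    using assms(1) unfolding Zloc_def by auto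
  obtain c d where y: "y = of_int c / of_int d" "d \<noteq> 0" "\<not> int p dvd d"
    using assms(2) unfolding Zloc_def by auto
  have bd: "b * d \<noteq> 0" "\<not> int p dvd b * d"
    using x y p by (auto simp: prime_dvd_mult_iff)
  have "x + y = of_int (a * d + c * b) / of_int (b * d)" "x * y = of_int (a * c) / of_int (b * d)"
    using x y by (simp_all add: field_simps)
  then show "x + y \<in> Zloc p" "x * y \<in> Zloc p"
    unfolding Zloc_def using bd by blast+
qed

lemma Tring_monomial: "c \<in> Zloc p \<Longrightarrow> c * z ^ k \<in> Tring p z"
  unfolding Tring_def using Zloc_of_int[of 0]
  by (intro CollectI exI[of _ "Suc k"] exI[of _ "\<lambda>i. if i = k then c else 0"])
    (auto simp: if_distrib sum.delta' cong: if_cong)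

lemma Tring_add:
  assumes "x \<in> Tring p z" "y \<in> Tring p z"
  shows "x + y \<in> Tring p z"
proof -
  obtain N c where x: "x = (\<Sum>i<N. c i * z ^ i)" "\<forall>i. c i \<in> Zloc p"
    using assms(1) unfolding Tring_def by auto
  obtain N' d where y: "y = (\<Sum>i<N'. d i * z ^ i)" "\<forall>i. d i \<in> Zloc p"
    using assms(2) unfolding Tring_def by auto
  have pad: "(\<Sum>i<K. (if i < L then f i else 0) * z ^ i) = (\<Sum>i<L. f i * z ^ i)" if "L \<le> K"
    for f L K
    using that by (intro sum.mono_neutral_cong_right) auto
  define e where "e i = (if i < N then c i else 0) + (if i < N' then d i else 0)" for i
  have "x + y = (\<Sum>i<N + N'. e i * z ^ i)"
    unfolding x y e_def distrib_right sum.distrib by (simp add: pad)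
  moreover have "\<forall>i. e i \<in> Zloc p"
    unfolding e_def using x y Zloc_of_int[of 0] Zloc_add_mult(1) by auto
  ultimately show ?thesis
    unfolding Tring_def by blast
qed

lemma Tring_sum: "(\<And>i. i \<in> A \<Longrightarrow> f i \<in> Tring p z) \<Longrightarrow> sum f A \<in> Tring p z"
  using Tring_monomial[OF Zloc_of_int, of 0 z 0]
  by (induction A rule: infinite_finite_induct) (auto intro: Tring_add)

lemma Tring_mult:
  assumes "x \<in> Tring p z" "y \<in> Tring p z"
  shows "x * y \<in> Tring p z"
proof -
  obtain N c where x: "x = (\<Sum>i<N. c i * z ^ i)" "\<forall>i. c i \<in> Zloc p"
    using assms(1) unfolding Tring_def by auto
  obtain N' d where y: "y = (\<Sum>i<N'. d i * z ^ i)" "\<forall>i. d i \<in> Zloc p"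
    using assms(2) unfolding Tring_def by auto
  have "x * y = (\<Sum>i<N. \<Sum>j<N'. (c i * d j) * z ^ (i + j))"
    unfolding x y by (simp add: sum_product power_add ac_simps)
  also have "\<dots> \<in> Tring p z"
    using x y by (intro Tring_sum Tring_monomial Zloc_add_mult(2)) auto
  finally show ?thesis .
qed

lemma Tring_of_int: "of_int a \<in> Tring p z"
  using Tring_monomial[OF Zloc_of_int, of a z 0] by simp

lemma Tring_generator: "z \<in> Tring p z"
  using Tring_monomial[OF Zloc_of_int, of 1 z 1] by simp

lemma Tring_of_nat: "of_nat a \<in> Tring p z"
  using Tring_of_int[of "int a"] by simp

lemma Tring_one: "1 \<in> Tring p z"
  using Tring_of_int[of 1] by simp

lemma Tring_uminus: "x \<in> Tring p z \<Longrightarrow> - x \<in> Tring p z"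
  using Tring_mult[OF Tring_of_int[of "-1"]] by simp

lemma Tring_diff: "x \<in> Tring p z \<Longrightarrow> y \<in> Tring p z \<Longrightarrow> x - y \<in> Tring p z"
  using Tring_add[OF _ Tring_uminus] by simp

lemma Tring_power: "x \<in> Tring p z \<Longrightarrow> x ^ k \<in> Tring p z"
  by (induction k) (auto intro: Tring_one Tring_mult)

lemmas Tring_closed =
  Tring_add Tring_diff Tring_uminus Tring_mult Tring_power Tring_sum
  Tring_one Tring_of_nat Tring_generator

end

lemma inverse_prime_notin_Tring:
  fixes z :: complex
  assumes p: "prime p" and z: "z ^ M = 1" and M: "M > 0"
  shows "1 / of_nat p \<notin> Tring p z"
proof
  assume "1 / of_nat p \<in> Tring p z"
  then obtain N c where eq: "1 / of_nat p = (\<Sum>i<N. c i * z ^ i)" and c: "\<forall>i. c i \<in> Zloc p"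
    unfolding Tring_def by auto
  have "\<forall>i. \<exists>a b. c i = of_int a / of_int b \<and> b \<noteq> 0 \<and> \<not> int p dvd b"
    using c unfolding Zloc_def by blast
  then obtain a b where ab: "\<And>i. c i = of_int (a i) / of_int (b i)" "\<And>i. b i \<noteq> 0"
    "\<And>i. \<not> int p dvd b i"
    by metis
  define B where "B = (\<Prod>i<N. b i)"
  define e where "e i = a i * (\<Prod>l\<in>{..<N} - {i}. b l)" for i
  have B: "\<not> int p dvd B"
    unfolding B_def using ab(3) p by (auto simp: prime_dvd_prod_iff)
  have Bc: "of_int B * c i = of_int (e i)" if "i < N" for i
  proof -
    have "B = b i * (\<Prod>l\<in>{..<N} - {i}. b l)"
      unfolding B_def using that by (simp add: prod.remove)
    then show ?thesis
      unfolding e_def using ab(1,2)[of i] by simp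
  qed
  have "of_int B / of_nat p = of_int B * (1 / of_nat p :: complex)"
    by simp
  also have "\<dots> = (\<Sum>i<N. (of_int B * c i) * z ^ i)"
    unfolding eq by (simp add: sum_distrib_left mult.assoc)
  also have "\<dots> = (\<Sum>i<N. of_int (e i) * z ^ i)"
    by (simp add: Bc)
  finally have "algebraic_int (of_int B / of_nat p :: complex)"
    using algebraic_int_int_combination_root_of_unity[OF z M] by simp
  moreover have "(of_int B / of_nat p :: complex) \<in> \<rat>"
    by (intro Rats_divide) auto
  ultimately obtain k where "(of_int B / of_nat p :: complex) = of_int k"
    using rational_algebraic_int_is_int by (metis Ints_cases)
  then have "(of_int B :: complex) = of_int (int p * k)"
    using p by (simp add: field_simps)
  then have "B = int p * k"
    by (simp only: of_int_eq_iff)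
  with B show False
    by simp
qed

lemma prime_dvd_choose_prime_power:
  assumes p: "prime p" and k: "0 < k" "k < p ^ n"
  shows "p dvd (p ^ n choose k)"
proof (rule ccontr)
  assume "\<not> p dvd (p ^ n choose k)"
  then have "coprime (p ^ n) (p ^ n choose k)"
    using p by (simp add: prime_imp_coprime)
  moreover have "p ^ n dvd k * (p ^ n choose k)"
    using times_binomial_minus1_eq[OF k(1)] by simp
  ultimately have "p ^ n dvd k"
    using coprime_dvd_mult_left_iff by blast
  with k show False
    by (auto dest: dvd_imp_le)
qed

lemma Tring_power_add_prime_power:
  assumes p: "prime p" and x: "x \<in> Tring p z" and y: "y \<in> Tring p z"
  shows "\<exists>w\<in>Tring p z. (x + y) ^ (p ^ n) = x ^ (p ^ n) + y ^ (p ^ n) + of_nat p * w"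
proof -
  define q where "q = p ^ n"
  define w where "w = (\<Sum>k\<in>{1..<q}. of_nat ((q choose k) div p) * x ^ k * y ^ (q - k))"
  have "q > 0"
    unfolding q_def using p prime_gt_0_nat by simp
  then have "{..q} = insert q (insert 0 {1..<q})"
    by auto
  then have "(x + y) ^ q = x ^ q + y ^ q + (\<Sum>k\<in>{1..<q}. of_nat (q choose k) * x ^ k * y ^ (q - k))"
    unfolding binomial_ring using \<open>q > 0\<close> by (simp add: algebra_simps)
  moreover have "(\<Sum>k\<in>{1..<q}. of_nat (q choose k) * x ^ k * y ^ (q - k)) = of_nat p * w"
    unfolding w_def sum_distrib_left
  proof (intro sum.cong refl)
    fix k
    assume "k \<in> {1..<q}"
    then have "q choose k = p * ((q choose k) div p)"
      using prime_dvd_choose_prime_power[OF p] unfolding q_def by simp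
    then show "of_nat (q choose k) * x ^ k * y ^ (q - k)
        = of_nat p * (of_nat ((q choose k) div p) * x ^ k * y ^ (q - k))"
      by (metis mult.assoc of_nat_mult)
  qed
  moreover have "w \<in> Tring p z"
    unfolding w_def using p x y by (intro Tring_closed)
  ultimately show ?thesis
    unfolding q_def by auto
qed

lemma one_minus_root_prime_power:
  assumes p: "prime p" and z: "z ^ (p ^ n) = 1"
  shows "\<exists>w\<in>Tring p z. (1 - z) ^ (p ^ n) = of_nat p * w"
proof -
  obtain w where w: "w \<in> Tring p z"
    and "((1 - z) + z) ^ (p ^ n) = (1 - z) ^ (p ^ n) + z ^ (p ^ n) + of_nat p * w"
    using Tring_power_add_prime_power[OF p Tring_diff[OF p Tring_one[OF p] Tring_generator[OF p]]
        Tring_generator[OF p]] by blast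
  then have "(1 - z) ^ (p ^ n) = of_nat p * (- w)"
    using z by (simp add: eq_neg_iff_add_eq_0)
  moreover have "- w \<in> Tring p z"
    using p w by (rule Tring_uminus)
  ultimately show ?thesis
    by blast
qed

lemma one_minus_power_dvd_order:
  fixes z :: complex
  assumes p: "prime p" and z: "z ^ M = 1" and zm: "z ^ m \<noteq> 1"
  shows "\<exists>w\<in>Tring p z. (1 - z ^ m) * w = of_nat M"
proof -
  have "(z ^ m) ^ M = 1"
    by (metis mult.commute power_mult power_one z)
  then have "(\<Sum>i<M. (z ^ m) ^ i) = 0"
    using geometric_sum[OF zm, of M] by simp
  then have "of_nat M = (\<Sum>i<M. 1 - (z ^ m) ^ i)"
    by (simp add: sum_subtractf)
  also have "\<dots> = (1 - z ^ m) * (\<Sum>i<M. \<Sum>l<i. (z ^ m) ^ l)"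
    by (simp add: one_diff_power_eq sum_distrib_left)
  finally have "(1 - z ^ m) * (\<Sum>i<M. \<Sum>l<i. (z ^ m) ^ l) = of_nat M" ..
  moreover have "(\<Sum>i<M. \<Sum>l<i. (z ^ m) ^ l) \<in> Tring p z"
    using p by (intro Tring_closed)
  ultimately show ?thesis
    by blast
qed

lemma one_minus_root_power_dvd_prime_power_bound:
  fixes z :: complex
  assumes p: "prime p" and z: "z ^ (p ^ n) = 1"
    and y: "y \<in> Tring p z" and w: "w \<in> Tring p z" and k: "(1 - z) ^ k * y * w = of_nat (p ^ n)"
  shows "k < Suc n * p ^ n"
proof (rule ccontr)
  define K where "K = Suc n * p ^ n"
  assume "\<not> k < Suc n * p ^ n"
  then have k_eq: "k = p ^ n * Suc n + (k - K)"
    unfolding K_def by simp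
  obtain Y where Y: "Y \<in> Tring p z" "(1 - z) ^ (p ^ n) = of_nat p * Y"
    using one_minus_root_prime_power[OF p z] by blast
  \<comment> \<open>Then \<open>p ^ n\<close> is divisible by \<open>p ^ (n + 1)\<close> in \<open>T\<close>.\<close>
  define X where "X = Y ^ Suc n * (1 - z) ^ (k - K) * y * w"
  have "(1 - z) ^ k = of_nat p ^ Suc n * (Y ^ Suc n * (1 - z) ^ (k - K))"
    by (subst k_eq) (simp add: power_add power_mult Y(2) power_mult_distrib)
  then have "of_nat p ^ n * 1 = of_nat p ^ n * (of_nat p * X :: complex)"
    using k unfolding X_def by (simp add: algebra_simps)
  then have "1 / of_nat p = X"
    using p by (simp add: field_simps)
  moreover have "X \<in> Tring p z"
    unfolding X_def using p Y(1) y w by (intro Tring_closed)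
  ultimately show False
    using inverse_prime_notin_Tring[OF p z] p by (simp add: prime_gt_0_nat)
qed

context
  fixes p n :: nat and z x :: complex
  assumes p: "prime p" and z: "z ^ (p ^ n) = 1" and x: "x \<in> Tring p z"
    and x_dvd: "\<exists>w\<in>Tring p z. x * w = of_nat (p ^ n)"
begin

lemma vt_bounded:
  assumes "\<exists>y\<in>Tring p z. x = (1 - z) ^ k * y"
  shows "k \<le> Suc n * p ^ n"
proof -
  obtain y w where "y \<in> Tring p z" "x = (1 - z) ^ k * y" "w \<in> Tring p z" "x * w = of_nat (p ^ n)"
    using assms x_dvd by blast
  then show ?thesis
    using one_minus_root_power_dvd_prime_power_bound[OF p z, of y w k] by simp
qed

lemma vt_factor: "\<exists>y\<in>Tring p z. x = (1 - z) ^ vt p z x * y"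
  unfolding vt_def
proof (rule GreatestI_nat)
  show "\<exists>y\<in>Tring p z. x = (1 - z) ^ 0 * y"
    using x by simp
qed (fact vt_bounded)

lemma le_vt: "y \<in> Tring p z \<Longrightarrow> x = (1 - z) ^ k * y \<Longrightarrow> k \<le> vt p z x"
  unfolding vt_def by (rule Greatest_le_nat[OF _ vt_bounded]) auto

end

lemma vt_mult_unit:
  assumes p: "prime p" and u: "u \<in> Tring p z" "u' \<in> Tring p z" "u' * u = 1"
  shows "vt p z (u * x) = vt p z x"
proof -
  have "(\<exists>y\<in>Tring p z. u * x = (1 - z) ^ k * y) \<longleftrightarrow> (\<exists>y\<in>Tring p z. x = (1 - z) ^ k * y)" for k
  proof
    assume "\<exists>y\<in>Tring p z. u * x = (1 - z) ^ k * y"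
    then obtain y where y: "y \<in> Tring p z" "u * x = (1 - z) ^ k * y"
      by blast
    have "x = u' * (u * x)"
      using u(3) by (simp add: mult.assoc[symmetric])
    also have "\<dots> = (1 - z) ^ k * (u' * y)"
      by (simp add: y(2) ac_simps)
    finally have "x = (1 - z) ^ k * (u' * y)" .
    moreover have "u' * y \<in> Tring p z"
      using p u(2) y(1) by (rule Tring_mult)
    ultimately show "\<exists>y\<in>Tring p z. x = (1 - z) ^ k * y"
      by blast
  next
    assume "\<exists>y\<in>Tring p z. x = (1 - z) ^ k * y"
    then obtain y where "y \<in> Tring p z" "x = (1 - z) ^ k * y"
      by blast
    then have "u * y \<in> Tring p z" "u * x = (1 - z) ^ k * (u * y)"
      using p u by (auto intro: Tring_mult simp: ac_simps)
    then show "\<exists>y\<in>Tring p z. u * x = (1 - z) ^ k * y"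
      by blast
  qed
  then show ?thesis
    unfolding vt_def by simp
qed

lemma vt_diff_one_minus_powers:
  assumes p: "prime p" and z: "z ^ M = 1" "M > 0" and ij: "i \<le> j"
  shows "vt p z ((1 - z ^ j) - (1 - z ^ i)) = vt p z (1 - z ^ (j - i))"
proof -
  have "i * (M - 1) + i = M * i"
    using z(2) by (cases M) auto
  then have "z ^ (i * (M - 1)) * z ^ i = 1"
    using z(1) by (metis power_add power_mult power_one)
  then have "vt p z (z ^ i * (1 - z ^ (j - i))) = vt p z (1 - z ^ (j - i))"
    using p by (intro vt_mult_unit[where u' = "z ^ (i * (M - 1))"] Tring_closed)
  moreover have "(1 - z ^ j) - (1 - z ^ i) = z ^ i * (1 - z ^ (j - i))"
    using ij by (simp add: right_diff_distrib flip: power_add)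
  ultimately show ?thesis
    by simp
qed

lemma vt_one_minus_power_mono:
  fixes z :: complex
  assumes p: "prime p" and z: "z ^ (p ^ n) = 1"
    and zm: "z ^ m \<noteq> 1" and zm': "z ^ m' \<noteq> 1" and s: "z ^ m' = (z ^ m) ^ s"
  shows "vt p z (1 - z ^ m) \<le> vt p z (1 - z ^ m')"
proof -
  have T: "1 - z ^ m \<in> Tring p z" "1 - z ^ m' \<in> Tring p z" "(\<Sum>l<s. (z ^ m) ^ l) \<in> Tring p z"
    using p by (blast intro: Tring_closed)+
  obtain y where y: "y \<in> Tring p z" "1 - z ^ m = (1 - z) ^ vt p z (1 - z ^ m) * y"
    using vt_factor[OF p z T(1) one_minus_power_dvd_order[OF p z zm]] by blast
  have "1 - z ^ m' = (1 - z ^ m) * (\<Sum>l<s. (z ^ m) ^ l)"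
    unfolding s by (rule one_diff_power_eq)
  also have "\<dots> = (1 - z) ^ vt p z (1 - z ^ m) * (y * (\<Sum>l<s. (z ^ m) ^ l))"
    by (subst y(2)) (simp add: mult.assoc)
  finally show ?thesis
    using le_vt[OF p z T(2) one_minus_power_dvd_order[OF p z zm']] Tring_mult[OF p y(1) T(3)]
    by blast
qed

lemma power_eq_power_power_if_multiplicity_dvd:
  fixes z :: "'a :: monoid_mult"
  assumes p: "prime p" and z: "z ^ (p ^ n) = 1" and m: "m > 0"
    and dvd: "p ^ multiplicity p m dvd m'"
  shows "\<exists>s. z ^ m' = (z ^ m) ^ s"
proof -
  obtain a where a: "m = p ^ multiplicity p m * a" "\<not> p dvd a"
    using multiplicity_decompose'[of m p] m p not_prime_unit by blast
  obtain b where b: "m' = p ^ multiplicity p m * b"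
    using dvd by blast
  have "coprime a p"
    using prime_imp_coprime[OF p a(2)] by (simp add: coprime_commute)
  then have "coprime a (p ^ n)"
    by simp
  then obtain x where "[a * x = 1] (mod p ^ n)"
    using cong_solve_coprime_nat by fastforce
  then have "[m * (x * b) = m'] (mod p ^ n)"
    using cong_scalar_left[of "a * x" 1 "p ^ n" "p ^ multiplicity p m * b"]
    by (subst a(1), subst b) (simp add: ac_simps)
  then have "(z ^ m) ^ (x * b) = z ^ m'"
    unfolding cong_def by (metis power_mult power_mod_root_of_unity[OF z])
  then show ?thesis
    by metis
qed

lemma card_dvd_diff_le:
  fixes d j k :: nat
  assumes d: "d > 0" and jk: "j \<le> k"
  shows "card {i\<in>{..<j}. d dvd j - i} \<le> card {i\<in>{..<j}. d dvd k - i}"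
proof (rule card_inj_on_le)
  define r where "r = (k - j) mod d"
  show "inj_on (\<lambda>i. i + r) {i\<in>{..<j}. d dvd j - i}"
    by (auto simp: inj_on_def)
  show "(\<lambda>i. i + r) ` {i\<in>{..<j}. d dvd j - i} \<subseteq> {i\<in>{..<j}. d dvd k - i}"
  proof (rule image_subsetI)
    fix i
    assume "i \<in> {i\<in>{..<j}. d dvd j - i}"
    then have i: "i < j" "d dvd j - i"
      by auto
    have "r < d"
      unfolding r_def using d by simp
    also have "d \<le> j - i"
      using i by (intro dvd_imp_le) auto
    finally have "i + r < j"
      by simp
    moreover have "k - (i + r) = (k - j) div d * d + (j - i)"
      using i jk div_mult_mod_eq[of "k - j" d] unfolding r_def by linarith
    then have "d dvd k - (i + r)"
      using dvd_add[OF dvd_triv_right i(2)] by simp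
    ultimately show "i + r \<in> {i\<in>{..<j}. d dvd k - i}"
      by simp
  qed
qed simp

lemma mono_eq_sum_increments:
  fixes f :: "nat \<Rightarrow> nat"
  assumes "mono f"
  shows "f v = f 0 + (\<Sum>e<v. f (Suc e) - f e)"
proof (induction v)
  case (Suc v)
  have "f v \<le> f (Suc v)"
    using assms by (simp add: monoD)
  with Suc.IH show ?case
    by simp
qed simp

lemma mono_multiplicity_eq_sum:
  fixes f :: "nat \<Rightarrow> nat" and p m E :: nat
  assumes f: "mono f" and p: "p > 1" and m: "m > 0" and E: "multiplicity p m \<le> E"
  shows "f (multiplicity p m) = f 0 + (\<Sum>e<E. if p ^ Suc e dvd m then f (Suc e) - f e else 0)"
proof -
  have nonzero_nonunit: "m \<noteq> 0" "\<not> is_unit p"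
    using m p by auto
  have dvd_iff: "p ^ Suc e dvd m \<longleftrightarrow> e < multiplicity p m" for e
    using power_dvd_iff_le_multiplicity[OF nonzero_nonunit, of "Suc e"] by (simp only: Suc_le_eq)
  have "(\<Sum>e<E. if p ^ Suc e dvd m then f (Suc e) - f e else 0)
      = (\<Sum>e\<in>{..<E} \<inter> {e. p ^ Suc e dvd m}. f (Suc e) - f e)"
    by (simp only: sum.If_cases finite_lessThan) simp
  also have "{..<E} \<inter> {e. p ^ Suc e dvd m} = {..<multiplicity p m}"
    unfolding dvd_iff using E by auto
  finally show ?thesis
    using mono_eq_sum_increments[OF f, of "multiplicity p m"] by simp
qed

lemma sum_mono_multiplicity_shift_le:
  fixes f :: "nat \<Rightarrow> nat" and p j k :: nat
  assumes f: "mono f" and p: "p > 1" and jk: "j \<le> k"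
  shows "(\<Sum>i<j. f (multiplicity p (j - i))) \<le> (\<Sum>i<j. f (multiplicity p (k - i)))"
proof -
  define d where "d e = f (Suc e) - f e" for e
  have expand: "(\<Sum>i<j. f (multiplicity p (l - i)))
      = j * f 0 + (\<Sum>e<k. d e * card {i\<in>{..<j}. p ^ Suc e dvd l - i})"
    if l: "j \<le> l" "l \<le> k" for l
  proof -
    have "multiplicity p (l - i) \<le> k" if "i < j" for i
    proof -
      have "multiplicity p (l - i) < p ^ multiplicity p (l - i)"
        using p by (simp add: power_gt_expt)
      also have "\<dots> \<le> l - i"
        using that l by (intro dvd_imp_le multiplicity_dvd) auto
      finally show ?thesis
        using l by simp
    qed
    then have "(\<Sum>i<j. f (multiplicity p (l - i)))
        = (\<Sum>i<j. f 0 + (\<Sum>e<k. if p ^ Suc e dvd l - i then d e else 0))"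
      unfolding d_def using l by (intro sum.cong refl mono_multiplicity_eq_sum[OF f p]) auto
    also have "\<dots> = j * f 0 + (\<Sum>e<k. \<Sum>i<j. if p ^ Suc e dvd l - i then d e else 0)"
      by (simp add: sum.distrib sum.swap[of _ "{..<j}"])
    also have "\<dots> = j * f 0 + (\<Sum>e<k. d e * card {i\<in>{..<j}. p ^ Suc e dvd l - i})"
      by (simp add: sum.If_cases Int_def mult.commute)
    finally show ?thesis .
  qed
  show ?thesis
    unfolding expand[OF order_refl jk] expand[OF jk order_refl]
    using p jk by (intro add_left_mono sum_mono mult_le_mono2 card_dvd_diff_le) auto
qed

lemma inj_on_power_primitive_root:
  fixes z :: "'a :: idom"
  assumes z: "z ^ N = 1" and primitive: "\<forall>k. 0 < k \<and> k < N \<longrightarrow> z ^ k \<noteq> 1"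
  shows "inj_on (\<lambda>j. z ^ j) {0..<N}"
proof (rule linorder_inj_onI')
  fix i j
  assume ij: "i \<in> {0..<N}" "j \<in> {0..<N}" "i < j"
  then have "z \<noteq> 0"
    using z by (auto simp: power_0_left)
  moreover have "z ^ j = z ^ i * z ^ (j - i)"
    using ij(3) by (simp flip: power_add)
  moreover have "z ^ (j - i) \<noteq> 1"
    using primitive ij by auto
  ultimately show "z ^ i \<noteq> z ^ j"
    by auto
qed

lemma multiplicity_less_if_less_power:
  fixes p m n :: nat
  assumes p: "p > 1" and m: "0 < m" "m < p ^ n"
  shows "multiplicity p m < n"
proof -
  have "p ^ multiplicity p m \<le> m"
    using m by (intro dvd_imp_le multiplicity_dvd) auto
  with m(2) have "p ^ multiplicity p m < p ^ n"
    by simp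
  then show ?thesis
    by (rule power_less_imp_less_exp[OF p])
qed

context
  fixes p n :: nat and z :: complex
  assumes p: "prime p" and n: "n \<ge> 1" and z: "z ^ (p ^ n) = 1"
    and primitive: "\<forall>k. 0 < k \<and> k < p ^ n \<longrightarrow> z ^ k \<noteq> 1"
begin

lemma vt_one_minus_root_power_le:
  assumes m: "0 < m" "m < p ^ n" and m': "0 < m'" "m' < p ^ n"
    and dvd: "p ^ multiplicity p m dvd m'"
  shows "vt p z (1 - z ^ m) \<le> vt p z (1 - z ^ m')"
proof -
  obtain s where "z ^ m' = (z ^ m) ^ s"
    using power_eq_power_power_if_multiplicity_dvd[OF p z m(1) dvd] by blast
  then show ?thesis
    using vt_one_minus_power_mono[OF p z] primitive m m' by blast
qed

lemma vt_one_minus_root_power_eq: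
  assumes m: "0 < m" "m < p ^ n"
  shows "vt p z (1 - z ^ m) = vt p z (1 - z ^ p ^ multiplicity p m)"
proof -
  have "p ^ multiplicity p m < p ^ n"
    using multiplicity_less_if_less_power[OF prime_gt_1_nat[OF p] m] p prime_gt_1_nat by simp
  moreover have "multiplicity p (p ^ multiplicity p m) = multiplicity p m"
    using p by (simp add: multiplicity_same_power)
  ultimately show ?thesis
    using m p by (intro antisym vt_one_minus_root_power_le)
      (auto simp: multiplicity_dvd prime_gt_0_nat)
qed

\<comment> \<open>Capping the exponent at \<open>n - 1\<close> keeps away from \<open>1 - z ^ p ^ n = 0\<close>, whose \<open>vt\<close> is a
  junk value.\<close>
lemma mono_vt_one_minus_root_prime_power: "mono (\<lambda>e. vt p z (1 - z ^ p ^ min e (n - 1)))"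
proof (rule monoI)
  fix e e' :: nat
  assume "e \<le> e'"
  then have "p ^ min e (n - 1) dvd p ^ min e' (n - 1)"
    by (intro le_imp_power_dvd) simp
  moreover have "p ^ min e (n - 1) < p ^ n" "p ^ min e' (n - 1) < p ^ n"
    using n p prime_gt_1_nat by (auto intro: power_strict_increasing)
  ultimately show "vt p z (1 - z ^ p ^ min e (n - 1)) \<le> vt p z (1 - z ^ p ^ min e' (n - 1))"
    using p by (intro vt_one_minus_root_power_le)
      (auto simp: multiplicity_same_power prime_gt_0_nat)
qed

lemma sum_vt_diff_one_minus_root_powers_le:
  assumes jk: "j \<le> k" "k < p ^ n"
  shows "(\<Sum>i<j. vt p z ((1 - z ^ j) - (1 - z ^ i)))
    \<le> (\<Sum>i<j. vt p z ((1 - z ^ k) - (1 - z ^ i)))"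
proof -
  define f where "f e = vt p z (1 - z ^ p ^ min e (n - 1))" for e
  have f: "vt p z (1 - z ^ m) = f (multiplicity p m)" if "0 < m" "m < p ^ n" for m
    using vt_one_minus_root_power_eq[OF that]
      multiplicity_less_if_less_power[OF prime_gt_1_nat[OF p] that]
    unfolding f_def by (simp add: min_absorb1)
  have vt_diff: "vt p z ((1 - z ^ l) - (1 - z ^ i)) = vt p z (1 - z ^ (l - i))" if "i \<le> l" for i l
    using vt_diff_one_minus_powers[OF p z _ that] p by (simp add: prime_gt_0_nat)
  have "(\<Sum>i<j. vt p z ((1 - z ^ j) - (1 - z ^ i))) = (\<Sum>i<j. f (multiplicity p (j - i)))"
    using jk by (intro sum.cong refl trans[OF vt_diff f]) auto
  also have "\<dots> \<le> (\<Sum>i<j. f (multiplicity p (k - i)))"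
    using mono_vt_one_minus_root_prime_power p prime_gt_1_nat jk(1)
    unfolding f_def by (intro sum_mono_multiplicity_shift_le) auto
  also have "\<dots> = (\<Sum>i<j. vt p z ((1 - z ^ k) - (1 - z ^ i)))"
    using jk by (intro sum.cong refl trans[OF vt_diff f, symmetric]) auto
  finally show ?thesis .
qed

end

theorem lemma3p14:
  fixes p n :: nat and \<zeta> :: complex
  assumes "prime p" and "n \<ge> 1"
    and "\<zeta> ^ (p ^ n) = 1" and "\<forall>k. 0 < k \<and> k < p ^ n \<longrightarrow> \<zeta> ^ k \<noteq> 1"
  shows "minimally_ordered p \<zeta> (p ^ n) (\<lambda>j. 1 - \<zeta> ^ j)"
proof -
  have "1 - \<zeta> ^ j \<in> Tring p \<zeta>" for j
    using assms(1) by (intro Tring_closed)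
  moreover have "inj_on (\<lambda>j. 1 - \<zeta> ^ j) {0..<p ^ n}"
    using inj_on_power_primitive_root[OF assms(3,4)] by (auto simp: inj_on_def)
  moreover have "(\<Sum>i<j. vt p \<zeta> ((1 - \<zeta> ^ j) - (1 - \<zeta> ^ i)))
      \<le> (\<Sum>i<j. vt p \<zeta> ((1 - \<zeta> ^ k) - (1 - \<zeta> ^ i)))" if "j < k" "k < p ^ n" for j k
    using that by (intro sum_vt_diff_one_minus_root_powers_le[OF assms]) auto
  ultimately show ?thesis
    unfolding minimally_ordered_def by blast
qed

end
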